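(* Let $G=\langle\sigma\rangle\times\langle\tau\rangle$ be a finite bicyclic group (direct product of the cyclic groups generated by $\sigma$ and $\tau$) and $M$ a $G$-module, written multiplicatively. For $H\le G$ let $M^H$ denote the $H$-invariants, and let $N_\sigma:M^{\langle\tau\rangle}\to M^G$ be the norm map $x\mapsto\prod_{j=0}^{\operatorname{ord}\sigma-1}\sigma^j(x)$. Then the kernel of the restriction map $$H^1(G,M)\to H^1(\langle\sigma\rangle,M)\times H^1(\langle\tau\rangle,M)\times H^1(\langle\sigma\tau\rangle,M)$$ is isomorphic to $$Q=\bigl(\ker(N_\sigma)\cap M^{\sigma-1}\cap M^{\sigma\tau-1}\bigr)\big/\bigl(M^{\langle\tau\rangle}\bigr)^{\sigma-1},$$ where for $g\in G$ and a subgroup $N\subseteq M$, $N^{g-1}=\{g(x)x^{-1}:x\in N\}$. *)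

theory Defs
  imports "HOL-Algebra.Algebra"
begin

definition G_module :: "'g monoid \<Rightarrow> 'm monoid \<Rightarrow> ('g \<Rightarrow> 'm \<Rightarrow> 'm) \<Rightarrow> bool" where
  "G_module G M act \<longleftrightarrow> group G \<and> comm_group M
     \<and> (\<forall>g\<in>carrier G. act g \<in> hom M M)
     \<and> (\<forall>x\<in>carrier M. act \<one>\<^bsub>G\<^esub> x = x)
     \<and> (\<forall>g\<in>carrier G. \<forall>h\<in>carrier G. \<forall>x\<in>carrier M.
          act (g \<otimes>\<^bsub>G\<^esub> h) x = act g (act h x))"

definition invariants :: "'g set \<Rightarrow> 'm monoid \<Rightarrow> ('g \<Rightarrow> 'm \<Rightarrow> 'm) \<Rightarrow> 'm set" where
  "invariants H M act = {x \<in> carrier M. \<forall>h\<in>H. act h x = x}"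

definition minus_one_image :: "'m monoid \<Rightarrow> ('g \<Rightarrow> 'm \<Rightarrow> 'm) \<Rightarrow> 'g \<Rightarrow> 'm set \<Rightarrow> 'm set" where
  "minus_one_image M act g N = (\<lambda>x. act g x \<otimes>\<^bsub>M\<^esub> inv\<^bsub>M\<^esub> x) ` N"

definition Z1 :: "'g monoid \<Rightarrow> 'm monoid \<Rightarrow> ('g \<Rightarrow> 'm \<Rightarrow> 'm) \<Rightarrow> 'g set \<Rightarrow> ('g \<Rightarrow> 'm) set" where
  "Z1 G M act H = {f. f \<in> H \<rightarrow>\<^sub>E carrier M \<and>
      (\<forall>g\<in>H. \<forall>h\<in>H. f (g \<otimes>\<^bsub>G\<^esub> h) = f g \<otimes>\<^bsub>M\<^esub> act g (f h))}"

definition Z1_group :: "'g monoid \<Rightarrow> 'm monoid \<Rightarrow> ('g \<Rightarrow> 'm \<Rightarrow> 'm) \<Rightarrow> 'g set \<Rightarrow> ('g \<Rightarrow> 'm) monoid" where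
  "Z1_group G M act H = \<lparr>carrier = Z1 G M act H,
      monoid.mult = (\<lambda>f f'. \<lambda>g\<in>H. f g \<otimes>\<^bsub>M\<^esub> f' g),
      monoid.one = (\<lambda>g\<in>H. \<one>\<^bsub>M\<^esub>)\<rparr>"

definition B1 :: "'g monoid \<Rightarrow> 'm monoid \<Rightarrow> ('g \<Rightarrow> 'm \<Rightarrow> 'm) \<Rightarrow> 'g set \<Rightarrow> ('g \<Rightarrow> 'm) set" where
  "B1 G M act H = {(\<lambda>g\<in>H. act g x \<otimes>\<^bsub>M\<^esub> inv\<^bsub>M\<^esub> x) | x. x \<in> carrier M}"

definition H1 :: "'g monoid \<Rightarrow> 'm monoid \<Rightarrow> ('g \<Rightarrow> 'm \<Rightarrow> 'm) \<Rightarrow> 'g set \<Rightarrow> ('g \<Rightarrow> 'm) set monoid" where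
  "H1 G M act H = Z1_group G M act H Mod B1 G M act H"

definition res :: "'g monoid \<Rightarrow> 'm monoid \<Rightarrow> ('g \<Rightarrow> 'm \<Rightarrow> 'm) \<Rightarrow> 'g set \<Rightarrow>
    ('g \<Rightarrow> 'm) set \<Rightarrow> ('g \<Rightarrow> 'm) set" where
  "res G M act H C = set_mult (Z1_group G M act H) ((\<lambda>f. restrict f H) ` C) (B1 G M act H)"

definition norm_map :: "'g monoid \<Rightarrow> 'm monoid \<Rightarrow> ('g \<Rightarrow> 'm \<Rightarrow> 'm) \<Rightarrow> 'g \<Rightarrow> 'm \<Rightarrow> 'm" where
  "norm_map G M act s x = finprod M (\<lambda>j. act (s [^]\<^bsub>G\<^esub> j) x) {..<group.ord G s}"

end

theory Submission
  imports Defs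
begin

(*
  Let m be the order of \<sigma> and write P_k(a) = a \<sigma>(a) ... \<sigma>^(k-1)(a) for the
  partial \<sigma>-norms, so that norm_map is P_m.  Every g in G = <\<sigma>> x <\<tau>> is \<sigma>^i \<tau>^j with i
  unique modulo m (its "\<sigma>-exponent").  For a in the numerator Q_num of Q, the function
  \<sigma>^i \<tau>^j \<mapsto> P_i(a) is a crossed homomorphism.  On a cyclic subgroup <h> a cocycle is a
  coboundary iff its value at h has the form h(x) x^-1; hence the class of this cocycle restricts
  trivially to <\<sigma>>, <\<tau>> and <\<sigma>\<tau>>.  This gives a homomorphism from Q_num onto the kernel of
  the restriction map: a cocycle in that kernel may be multiplied by a coboundary so that it
  vanishes at \<tau>, and it is then the cocycle attached to its value at \<sigma>.  The class of the
  cocycle attached to a is trivial iff a lies in the denominator Q_den = (M^<\<tau>>)^(\<sigma>-1), and the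
  first isomorphism theorem concludes.
*)

locale G_mod =
  fixes G :: "'g monoid" and M :: "'m monoid" and act :: "'g \<Rightarrow> 'm \<Rightarrow> 'm"
  assumes G_module: "G_module G M act"
begin

sublocale G: group G using G_module by (simp add: G_module_def)
sublocale M: comm_group M using G_module by (simp add: G_module_def)

lemma act_hom: "g \<in> carrier G \<Longrightarrow> group_hom M M (act g)"
  using G_module by (simp add: G_module_def group_hom_def group_hom_axioms_def M.is_group)

lemma act_closed [simp]: "g \<in> carrier G \<Longrightarrow> x \<in> carrier M \<Longrightarrow> act g x \<in> carrier M"
  using group_hom.hom_closed[OF act_hom] .

lemma act_mult [simp]:
  "g \<in> carrier G \<Longrightarrow> x \<in> carrier M \<Longrightarrow> y \<in> carrier M \<Longrightarrow>
   act g (x \<otimes>\<^bsub>M\<^esub> y) = act g x \<otimes>\<^bsub>M\<^esub> act g y"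
  using group_hom.hom_mult[OF act_hom] .

lemma act_one [simp]: "g \<in> carrier G \<Longrightarrow> act g \<one>\<^bsub>M\<^esub> = \<one>\<^bsub>M\<^esub>"
  using group_hom.hom_one[OF act_hom] .

lemma act_inv [simp]: "g \<in> carrier G \<Longrightarrow> x \<in> carrier M \<Longrightarrow> act g (inv\<^bsub>M\<^esub> x) = inv\<^bsub>M\<^esub> (act g x)"
  using group_hom.hom_inv[OF act_hom] .

lemma act_unit [simp]: "x \<in> carrier M \<Longrightarrow> act \<one>\<^bsub>G\<^esub> x = x"
  using G_module by (simp add: G_module_def)

lemma act_comp:
  "g \<in> carrier G \<Longrightarrow> h \<in> carrier G \<Longrightarrow> x \<in> carrier M \<Longrightarrow> act (g \<otimes>\<^bsub>G\<^esub> h) x = act g (act h x)"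
  using G_module by (simp add: G_module_def)

lemma act_commute:
  assumes "g \<in> carrier G" "h \<in> carrier G" "g \<otimes>\<^bsub>G\<^esub> h = h \<otimes>\<^bsub>G\<^esub> g" "x \<in> carrier M"
  shows "act g (act h x) = act h (act g x)"
  using assms by (metis act_comp)

lemma act_fixed_pow:
  "t \<in> carrier G \<Longrightarrow> x \<in> carrier M \<Longrightarrow> act t x = x \<Longrightarrow> act (t [^]\<^bsub>G\<^esub> (n::nat)) x = x"
  by (induction n) (auto simp: act_comp)

abbreviation dif :: "'g \<Rightarrow> 'm \<Rightarrow> 'm" where
  "dif g x \<equiv> act g x \<otimes>\<^bsub>M\<^esub> inv\<^bsub>M\<^esub> x"

lemma dif_mult:
  "g \<in> carrier G \<Longrightarrow> x \<in> carrier M \<Longrightarrow> y \<in> carrier M \<Longrightarrow>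
   dif g (x \<otimes>\<^bsub>M\<^esub> y) = dif g x \<otimes>\<^bsub>M\<^esub> dif g y"
  by (simp add: M.inv_mult M.m_ac)

lemma dif_inv:
  "g \<in> carrier G \<Longrightarrow> x \<in> carrier M \<Longrightarrow> dif g (inv\<^bsub>M\<^esub> x) = inv\<^bsub>M\<^esub> (dif g x)"
  by (simp add: M.inv_mult M.m_comm)

lemma dif_one_iff: "g \<in> carrier G \<Longrightarrow> x \<in> carrier M \<Longrightarrow> dif g x = \<one>\<^bsub>M\<^esub> \<longleftrightarrow> act g x = x"
  by (metis M.inv_closed M.inv_equality M.inv_inv M.r_inv act_closed)

lemma dif_comp:
  "g \<in> carrier G \<Longrightarrow> h \<in> carrier G \<Longrightarrow> x \<in> carrier M \<Longrightarrow>
   dif (g \<otimes>\<^bsub>G\<^esub> h) x = dif g x \<otimes>\<^bsub>M\<^esub> act g (dif h x)"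
  by (simp add: act_comp M.m_ac) (simp add: M.m_assoc[symmetric])

primrec pnorm :: "'g \<Rightarrow> 'm \<Rightarrow> nat \<Rightarrow> 'm" where
  "pnorm h a 0 = \<one>\<^bsub>M\<^esub>"
| "pnorm h a (Suc n) = pnorm h a n \<otimes>\<^bsub>M\<^esub> act (h [^]\<^bsub>G\<^esub> n) a"

lemma pnorm_closed [simp]: "h \<in> carrier G \<Longrightarrow> a \<in> carrier M \<Longrightarrow> pnorm h a n \<in> carrier M"
  by (induction n) auto

lemma pnorm_add:
  assumes "h \<in> carrier G" "a \<in> carrier M"
  shows "pnorm h a (i + k) = pnorm h a i \<otimes>\<^bsub>M\<^esub> act (h [^]\<^bsub>G\<^esub> i) (pnorm h a k)"
proof (induction k)
  case (Suc k)
  have "act (h [^]\<^bsub>G\<^esub> (i + k)) a = act (h [^]\<^bsub>G\<^esub> i) (act (h [^]\<^bsub>G\<^esub> k) a)"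
    using assms by (simp add: G.nat_pow_mult[symmetric] act_comp)
  with Suc assms show ?case by (simp add: M.m_assoc)
qed (use assms in simp)

lemma pnorm_mult:
  assumes "h \<in> carrier G" "a \<in> carrier M" "b \<in> carrier M"
  shows "pnorm h (a \<otimes>\<^bsub>M\<^esub> b) n = pnorm h a n \<otimes>\<^bsub>M\<^esub> pnorm h b n"
  by (induction n) (use assms in \<open>simp_all add: M.m_ac\<close>)

lemma pnorm_one [simp]: "h \<in> carrier G \<Longrightarrow> pnorm h \<one>\<^bsub>M\<^esub> n = \<one>\<^bsub>M\<^esub>"
  by (induction n) auto

lemma pnorm_inv:
  assumes "h \<in> carrier G" "a \<in> carrier M"
  shows "pnorm h (inv\<^bsub>M\<^esub> a) n = inv\<^bsub>M\<^esub> (pnorm h a n)"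
  by (induction n) (use assms in \<open>simp_all add: M.inv_mult M.m_comm\<close>)

text \<open>The partial norms of a coboundary telescope.\<close>
lemma pnorm_dif:
  assumes "h \<in> carrier G" "x \<in> carrier M"
  shows "pnorm h (dif h x) n = dif (h [^]\<^bsub>G\<^esub> n) x"
proof (induction n)
  case (Suc n)
  have "dif (h [^]\<^bsub>G\<^esub> Suc n) x = dif (h [^]\<^bsub>G\<^esub> n) x \<otimes>\<^bsub>M\<^esub> act (h [^]\<^bsub>G\<^esub> n) (dif h x)"
    using dif_comp[of "h [^]\<^bsub>G\<^esub> n" h x] assms by simp
  with Suc show ?case by simp
qed (use assms in simp)

lemma pnorm_fixed:
  assumes "h \<in> carrier G" "t \<in> carrier G" "h \<otimes>\<^bsub>G\<^esub> t = t \<otimes>\<^bsub>G\<^esub> h"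
    and "a \<in> carrier M" "act t a = a"
  shows "act t (pnorm h a n) = pnorm h a n"
proof (induction n)
  case (Suc n)
  have "h [^]\<^bsub>G\<^esub> n \<otimes>\<^bsub>G\<^esub> t = t \<otimes>\<^bsub>G\<^esub> h [^]\<^bsub>G\<^esub> n"
    using assms G.group_commutes_pow by simp
  then have "act t (act (h [^]\<^bsub>G\<^esub> n) a) = act (h [^]\<^bsub>G\<^esub> n) a"
    using assms act_commute[of t "h [^]\<^bsub>G\<^esub> n" a] by simp
  with Suc assms show ?case by simp
qed (use assms in simp)

lemma pnorm_mod:
  assumes "h \<in> carrier G" "a \<in> carrier M" "pnorm h a m = \<one>\<^bsub>M\<^esub>"
  shows "pnorm h a n = pnorm h a (n mod m)"
proof -
  have "pnorm h a (r + m * q) = pnorm h a r" for r q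
  proof (induction q)
    case (Suc q)
    have "pnorm h a (r + m * Suc q) = pnorm h a ((r + m * q) + m)"
      by (simp add: algebra_simps)
    with Suc assms show ?case by (simp only: pnorm_add) simp
  qed simp
  from this[of "n mod m" "n div m"] show ?thesis by simp
qed

lemma finprod_pnorm:
  assumes "h \<in> carrier G" "a \<in> carrier M"
  shows "finprod M (\<lambda>j. act (h [^]\<^bsub>G\<^esub> j) a) {..<n} = pnorm h a n"
proof (induction n)
  case (Suc n)
  with assms show ?case
    by (simp add: lessThan_Suc M.m_comm)
qed simp

lemma Z1_group_simps [simp]:
  "carrier (Z1_group G M act H) = Z1 G M act H"
  "f \<otimes>\<^bsub>Z1_group G M act H\<^esub> f' = (\<lambda>g\<in>H. f g \<otimes>\<^bsub>M\<^esub> f' g)"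
  "\<one>\<^bsub>Z1_group G M act H\<^esub> = (\<lambda>g\<in>H. \<one>\<^bsub>M\<^esub>)"
  by (simp_all add: Z1_group_def)

lemma Z1_I:
  assumes "\<And>g. g \<in> H \<Longrightarrow> f g \<in> carrier M" and "\<And>g. g \<notin> H \<Longrightarrow> f g = undefined"
    and "\<And>g h. g \<in> H \<Longrightarrow> h \<in> H \<Longrightarrow> f (g \<otimes>\<^bsub>G\<^esub> h) = f g \<otimes>\<^bsub>M\<^esub> act g (f h)"
  shows "f \<in> Z1 G M act H"
  using assms by (auto simp: Z1_def PiE_def extensional_def)

lemma Z1_D:
  assumes "f \<in> Z1 G M act H"
  shows "\<And>g. g \<in> H \<Longrightarrow> f g \<in> carrier M" and "\<And>g. g \<notin> H \<Longrightarrow> f g = undefined"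
    and "\<And>g h. g \<in> H \<Longrightarrow> h \<in> H \<Longrightarrow> f (g \<otimes>\<^bsub>G\<^esub> h) = f g \<otimes>\<^bsub>M\<^esub> act g (f h)"
  using assms by (auto simp: Z1_def PiE_def extensional_def)

lemma Z1_mult_closed:
  assumes H: "subgroup H G" and f: "f \<in> Z1 G M act H" and f': "f' \<in> Z1 G M act H"
  shows "(\<lambda>g\<in>H. f g \<otimes>\<^bsub>M\<^esub> f' g) \<in> Z1 G M act H"
proof (rule Z1_I)
  fix g h assume "g \<in> H" "h \<in> H"
  with Z1_D[OF f] Z1_D[OF f'] subgroup.mem_carrier[OF H] subgroup.m_closed[OF H]
  show "(\<lambda>g\<in>H. f g \<otimes>\<^bsub>M\<^esub> f' g) (g \<otimes>\<^bsub>G\<^esub> h) =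
      (\<lambda>g\<in>H. f g \<otimes>\<^bsub>M\<^esub> f' g) g \<otimes>\<^bsub>M\<^esub> act g ((\<lambda>g\<in>H. f g \<otimes>\<^bsub>M\<^esub> f' g) h)"
    by (simp add: M.m_ac)
qed (use Z1_D[OF f] Z1_D[OF f'] in auto)

lemma Z1_inv_closed:
  assumes H: "subgroup H G" and f: "f \<in> Z1 G M act H"
  shows "(\<lambda>g\<in>H. inv\<^bsub>M\<^esub> f g) \<in> Z1 G M act H"
proof (rule Z1_I)
  fix g h assume "g \<in> H" "h \<in> H"
  with Z1_D[OF f] subgroup.mem_carrier[OF H] subgroup.m_closed[OF H]
  show "(\<lambda>g\<in>H. inv\<^bsub>M\<^esub> f g) (g \<otimes>\<^bsub>G\<^esub> h) =
      (\<lambda>g\<in>H. inv\<^bsub>M\<^esub> f g) g \<otimes>\<^bsub>M\<^esub> act g ((\<lambda>g\<in>H. inv\<^bsub>M\<^esub> f g) h)"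
    by (simp add: M.inv_mult)
qed (use Z1_D[OF f] in auto)

lemma Z1_comm_group:
  assumes H: "subgroup H G"
  shows "comm_group (Z1_group G M act H)"
proof (rule comm_groupI)
  show "\<one>\<^bsub>Z1_group G M act H\<^esub> \<in> carrier (Z1_group G M act H)"
    using subgroup.m_closed[OF H] subgroup.mem_carrier[OF H] by (auto intro!: Z1_I)
  fix f assume "f \<in> carrier (Z1_group G M act H)"
  then have f: "f \<in> Z1 G M act H" by simp
  show "\<one>\<^bsub>Z1_group G M act H\<^esub> \<otimes>\<^bsub>Z1_group G M act H\<^esub> f = f"
    using Z1_D[OF f] by (auto simp: fun_eq_iff)
  show "\<exists>f'\<in>carrier (Z1_group G M act H). f' \<otimes>\<^bsub>Z1_group G M act H\<^esub> f = \<one>\<^bsub>Z1_group G M act H\<^esub>"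
    using Z1_inv_closed[OF H f] Z1_D[OF f] by (intro bexI[of _ "\<lambda>g\<in>H. inv\<^bsub>M\<^esub> f g"]) auto
  fix f' assume "f' \<in> carrier (Z1_group G M act H)"
  then have f': "f' \<in> Z1 G M act H" by simp
  show "f \<otimes>\<^bsub>Z1_group G M act H\<^esub> f' \<in> carrier (Z1_group G M act H)"
    using Z1_mult_closed[OF H f f'] by simp
  show "f \<otimes>\<^bsub>Z1_group G M act H\<^esub> f' = f' \<otimes>\<^bsub>Z1_group G M act H\<^esub> f"
    using Z1_D[OF f] Z1_D[OF f'] by (auto simp: M.m_comm)
  fix f'' assume "f'' \<in> carrier (Z1_group G M act H)"
  then have f'': "f'' \<in> Z1 G M act H" by simp
  then show "f \<otimes>\<^bsub>Z1_group G M act H\<^esub> f' \<otimes>\<^bsub>Z1_group G M act H\<^esub> f'' =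
      f \<otimes>\<^bsub>Z1_group G M act H\<^esub> (f' \<otimes>\<^bsub>Z1_group G M act H\<^esub> f'')"
    using Z1_D[OF f] Z1_D[OF f'] Z1_D[OF f''] by (auto simp: M.m_assoc)
qed

lemma cocycle_pow:
  assumes H: "subgroup H G" and f: "f \<in> Z1 G M act H" and h: "h \<in> H"
  shows "f (h [^]\<^bsub>G\<^esub> n) = pnorm h (f h) n"
proof (induction n)
  case 0
  have "f \<one>\<^bsub>G\<^esub> = f \<one>\<^bsub>G\<^esub> \<otimes>\<^bsub>M\<^esub> f \<one>\<^bsub>G\<^esub>"
    using Z1_D(3)[OF f, of "\<one>\<^bsub>G\<^esub>" "\<one>\<^bsub>G\<^esub>"] Z1_D(1)[OF f] subgroup.one_closed[OF H] by simp
  then show ?case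
    using Z1_D(1)[OF f] subgroup.one_closed[OF H] by (simp add: M.l_cancel_one'[symmetric])
next
  case (Suc n)
  have hn: "h [^]\<^bsub>G\<^esub> n \<in> H"
    by (induction n) (simp_all add: h subgroup.one_closed[OF H] subgroup.m_closed[OF H])
  then have "f (h [^]\<^bsub>G\<^esub> n \<otimes>\<^bsub>G\<^esub> h) = f (h [^]\<^bsub>G\<^esub> n) \<otimes>\<^bsub>M\<^esub> act (h [^]\<^bsub>G\<^esub> n) (f h)"
    using Z1_D(3)[OF f hn h] by simp
  with Suc show ?case by simp
qed

definition cob :: "'g set \<Rightarrow> 'm \<Rightarrow> 'g \<Rightarrow> 'm" where
  "cob H x = (\<lambda>g\<in>H. dif g x)"

text \<open>\<open>B\<^sup>1\<close> is the image of the homomorphism \<open>cob H : M \<rightarrow> Z\<^sup>1\<close>, hence a subgroup of \<open>Z\<^sup>1\<close>.\<close>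
lemma B1_eq: "B1 G M act H = cob H ` carrier M"
  by (auto simp: B1_def cob_def)

lemma cob_Z1:
  assumes H: "subgroup H G" and x: "x \<in> carrier M"
  shows "cob H x \<in> Z1 G M act H"
  unfolding cob_def
  by (rule Z1_I) (use x subgroup.mem_carrier[OF H] subgroup.m_closed[OF H] dif_comp in auto)

lemma cob_mult:
  assumes "subgroup H G" "x \<in> carrier M" "y \<in> carrier M"
  shows "cob H x \<otimes>\<^bsub>Z1_group G M act H\<^esub> cob H y = cob H (x \<otimes>\<^bsub>M\<^esub> y)"
  using assms subgroup.mem_carrier[OF assms(1)] by (auto simp: cob_def fun_eq_iff M.inv_mult M.m_ac)

lemma B1_subgroup:
  assumes H: "subgroup H G"
  shows "subgroup (B1 G M act H) (Z1_group G M act H)"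
proof -
  interpret Z: comm_group "Z1_group G M act H" by (rule Z1_comm_group[OF H])
  have cob_inv: "inv\<^bsub>Z1_group G M act H\<^esub> cob H x = cob H (inv\<^bsub>M\<^esub> x)" if x: "x \<in> carrier M" for x
  proof (rule Z.inv_equality)
    have "cob H (inv\<^bsub>M\<^esub> x) \<otimes>\<^bsub>Z1_group G M act H\<^esub> cob H x = cob H \<one>\<^bsub>M\<^esub>"
      using cob_mult[OF H, of "inv\<^bsub>M\<^esub> x" x] x by simp
    then show "cob H (inv\<^bsub>M\<^esub> x) \<otimes>\<^bsub>Z1_group G M act H\<^esub> cob H x = \<one>\<^bsub>Z1_group G M act H\<^esub>"
      using subgroup.mem_carrier[OF H] by (simp add: cob_def fun_eq_iff)
  qed (use cob_Z1[OF H] x in auto)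
  show ?thesis unfolding B1_eq
    by (rule Z.subgroupI) (use cob_Z1[OF H] cob_mult[OF H] cob_inv in auto)
qed

lemma B1_normal: "subgroup H G \<Longrightarrow> B1 G M act H \<lhd> Z1_group G M act H"
  using B1_subgroup comm_group.normal_iff_subgroup Z1_comm_group by blast

lemma H1_group: "subgroup H G \<Longrightarrow> group (H1 G M act H)"
  unfolding H1_def by (rule normal.factorgroup_is_group[OF B1_normal])

lemma H1_simps [simp]:
  "carrier (H1 G M act H) = RCOSETS (Z1_group G M act H) (B1 G M act H)"
  "A \<otimes>\<^bsub>H1 G M act H\<^esub> B = set_mult (Z1_group G M act H) A B"
  "\<one>\<^bsub>H1 G M act H\<^esub> = B1 G M act H"
  by (simp_all add: H1_def FactGroup_def)

lemma class_trivial_iff: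
  assumes H: "subgroup H G" and f: "f \<in> Z1 G M act H"
  shows "B1 G M act H #>\<^bsub>Z1_group G M act H\<^esub> f = B1 G M act H \<longleftrightarrow> f \<in> B1 G M act H"
proof -
  interpret Z: comm_group "Z1_group G M act H" by (rule Z1_comm_group[OF H])
  show ?thesis
    using Z.coset_join2[OF _ B1_subgroup[OF H]] Z.rcos_self[OF _ B1_subgroup[OF H]] f by auto
qed

lemma restrict_coset:
  assumes H: "subgroup H G"
  shows "(\<lambda>f. restrict f H) ` (B1 G M act (carrier G) #>\<^bsub>Z1_group G M act (carrier G)\<^esub> f)
       = B1 G M act H #>\<^bsub>Z1_group G M act H\<^esub> restrict f H"
proof -
  have "restrict (cob (carrier G) x \<otimes>\<^bsub>Z1_group G M act (carrier G)\<^esub> f) H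
      = cob H x \<otimes>\<^bsub>Z1_group G M act H\<^esub> restrict f H" for x
    using subgroup.mem_carrier[OF H] by (auto simp: cob_def fun_eq_iff)
  then show ?thesis
    unfolding B1_eq r_coset_def by (auto simp: image_UN)
qed

lemma res_class:
  assumes H: "subgroup H G" and f: "f \<in> Z1 G M act (carrier G)"
  shows "res G M act H (B1 G M act (carrier G) #>\<^bsub>Z1_group G M act (carrier G)\<^esub> f)
       = B1 G M act H #>\<^bsub>Z1_group G M act H\<^esub> restrict f H"
proof -
  interpret Z: comm_group "Z1_group G M act H" by (rule Z1_comm_group[OF H])
  have rf: "restrict f H \<in> Z1 G M act H"
    using Z1_D[OF f] subgroup.mem_carrier[OF H] subgroup.m_closed[OF H] by (auto intro!: Z1_I)
  have "B1 G M act H = B1 G M act H #>\<^bsub>Z1_group G M act H\<^esub> \<one>\<^bsub>Z1_group G M act H\<^esub>"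
    by (rule Z.coset_mult_one[symmetric, OF subgroup.subset[OF B1_subgroup[OF H]]])
  then show ?thesis
    unfolding res_def restrict_coset[OF H]
    using normal.rcos_sum[OF B1_normal[OF H], of "restrict f H" "\<one>\<^bsub>Z1_group G M act H\<^esub>"] rf
    by (metis Z.one_closed Z.r_one Z1_group_simps(1))
qed

lemma res_trivial_iff:
  assumes H: "subgroup H G" and f: "f \<in> Z1 G M act (carrier G)"
  shows "res G M act H (B1 G M act (carrier G) #>\<^bsub>Z1_group G M act (carrier G)\<^esub> f) = B1 G M act H
     \<longleftrightarrow> (\<exists>x\<in>carrier M. \<forall>g\<in>H. f g = dif g x)"
proof -
  have rf: "restrict f H \<in> Z1 G M act H"
    using Z1_D[OF f] subgroup.mem_carrier[OF H] subgroup.m_closed[OF H] by (auto intro!: Z1_I)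
  have "res G M act H (B1 G M act (carrier G) #>\<^bsub>Z1_group G M act (carrier G)\<^esub> f) = B1 G M act H
      \<longleftrightarrow> (\<exists>x\<in>carrier M. restrict f H = cob H x)"
    unfolding res_class[OF H f] class_trivial_iff[OF H rf] unfolding B1_eq by (simp add: image_iff)
  moreover have "restrict f H = cob H x \<longleftrightarrow> (\<forall>g\<in>H. f g = dif g x)" for x
  proof
    assume eq: "restrict f H = cob H x"
    show "\<forall>g\<in>H. f g = dif g x"
    proof
      fix g assume "g \<in> H"
      then show "f g = dif g x" using fun_cong[OF eq, of g] by (simp add: cob_def)
    qed
  next
    assume "\<forall>g\<in>H. f g = dif g x"
    then show "restrict f H = cob H x"
      unfolding cob_def by (intro restrict_ext) simp
  qed
  ultimately show ?thesis by simp
qed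

lemma class_cob_mult:
  assumes f: "f \<in> Z1 G M act (carrier G)" and w: "w \<in> carrier M"
  shows "B1 G M act (carrier G) #>\<^bsub>Z1_group G M act (carrier G)\<^esub>
           (cob (carrier G) w \<otimes>\<^bsub>Z1_group G M act (carrier G)\<^esub> f)
       = B1 G M act (carrier G) #>\<^bsub>Z1_group G M act (carrier G)\<^esub> f"
proof -
  interpret Z: comm_group "Z1_group G M act (carrier G)" by (rule Z1_comm_group[OF G.subgroup_self])
  have B: "subgroup (B1 G M act (carrier G)) (Z1_group G M act (carrier G))"
    by (rule B1_subgroup[OF G.subgroup_self])
  have c: "cob (carrier G) w \<in> B1 G M act (carrier G)"
    using w unfolding B1_eq by blast
  then have "B1 G M act (carrier G) #>\<^bsub>Z1_group G M act (carrier G)\<^esub> cob (carrier G) w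
      = B1 G M act (carrier G)"
    using Z.coset_join2[OF _ B c] subgroup.subset[OF B] by blast
  then show ?thesis
    using Z.coset_mult_assoc[OF subgroup.subset[OF B], of "cob (carrier G) w" f]
      subgroup.subset[OF B] c f by auto
qed

lemma cocycle_decomp:
  assumes f: "f \<in> Z1 G M act (carrier G)" and "s \<in> carrier G" "t \<in> carrier G"
  shows "f (s [^]\<^bsub>G\<^esub> i \<otimes>\<^bsub>G\<^esub> t [^]\<^bsub>G\<^esub> j) = pnorm s (f s) i \<otimes>\<^bsub>M\<^esub> act (s [^]\<^bsub>G\<^esub> i) (pnorm t (f t) j)"
  using assms Z1_D(3)[OF f] cocycle_pow[OF G.subgroup_self f] by simp

end

lemma (in group) pow_eq_iff_mod:
  assumes "x \<in> carrier G"
  shows "x [^] (i::nat) = x [^] (j::nat) \<longleftrightarrow> i mod ord x = j mod ord x"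
proof -
  have "x [^] i = x [^] j \<longleftrightarrow> x [^] int i = x [^] int j" by (simp add: int_pow_int)
  also have "\<dots> \<longleftrightarrow> int (ord x) dvd (int j - int i)" using int_pow_eq[OF assms] by simp
  also have "\<dots> \<longleftrightarrow> i mod ord x = j mod ord x"
    by (metis mod_eq_dvd_iff of_nat_eq_iff of_nat_mod)
  finally show ?thesis .
qed

text \<open>A finite bicyclic G-module: \<open>G = \<langle>\<sigma>\<rangle> \<times> \<langle>\<tau>\<rangle>\<close> (internal direct product).\<close>
locale bicyclic = G_mod G M act for G :: "'g monoid" and M :: "'m monoid" and act +
  fixes \<sigma> \<tau> :: 'g
  assumes finite_G: "finite (carrier G)"
    and \<sigma>: "\<sigma> \<in> carrier G" and \<tau>: "\<tau> \<in> carrier G"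
    and commute: "\<sigma> \<otimes>\<^bsub>G\<^esub> \<tau> = \<tau> \<otimes>\<^bsub>G\<^esub> \<sigma>"
    and product: "set_mult G (generate G {\<sigma>}) (generate G {\<tau>}) = carrier G"
    and disjoint: "generate G {\<sigma>} \<inter> generate G {\<tau>} = {\<one>\<^bsub>G\<^esub>}"
begin

abbreviation m :: nat where "m \<equiv> G.ord \<sigma>"

lemma \<sigma>\<tau>: "\<sigma> \<otimes>\<^bsub>G\<^esub> \<tau> \<in> carrier G"
  using \<sigma> \<tau> by simp

lemma cyclic_subgroup: "h \<in> carrier G \<Longrightarrow> subgroup (generate G {h}) G"
  by (rule G.generate_is_subgroup) simp

lemma cyclic_subgroup_eq: "h \<in> carrier G \<Longrightarrow> generate G {h} = range (\<lambda>k::nat. h [^]\<^bsub>G\<^esub> k)"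
  using G.generate_pow_on_finite_carrier[OF finite_G] by blast

lemma sigma_pow_mod: "\<sigma> [^]\<^bsub>G\<^esub> (i::nat) = \<sigma> [^]\<^bsub>G\<^esub> (i mod m)"
  using G.pow_eq_iff_mod[OF \<sigma>] by simp

lemma decomp:
  assumes "g \<in> carrier G"
  shows "\<exists>(i::nat) (j::nat). g = \<sigma> [^]\<^bsub>G\<^esub> i \<otimes>\<^bsub>G\<^esub> \<tau> [^]\<^bsub>G\<^esub> j"
proof -
  obtain a b where "a \<in> generate G {\<sigma>}" "b \<in> generate G {\<tau>}" "g = a \<otimes>\<^bsub>G\<^esub> b"
    using assms product unfolding set_mult_def by blast
  then show ?thesis
    unfolding cyclic_subgroup_eq[OF \<sigma>] cyclic_subgroup_eq[OF \<tau>] by blast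
qed

lemma decomp_unique:
  assumes "\<sigma> [^]\<^bsub>G\<^esub> (i::nat) \<otimes>\<^bsub>G\<^esub> \<tau> [^]\<^bsub>G\<^esub> (j::nat) = \<sigma> [^]\<^bsub>G\<^esub> (i'::nat) \<otimes>\<^bsub>G\<^esub> \<tau> [^]\<^bsub>G\<^esub> (j'::nat)"
  shows "i mod m = i' mod m"
proof -
  let ?a = "\<sigma> [^]\<^bsub>G\<^esub> i" and ?b = "\<tau> [^]\<^bsub>G\<^esub> j" and ?c = "\<sigma> [^]\<^bsub>G\<^esub> i'" and ?d = "\<tau> [^]\<^bsub>G\<^esub> j'"
  have car: "?a \<in> carrier G" "?b \<in> carrier G" "?c \<in> carrier G" "?d \<in> carrier G"
    using \<sigma> \<tau> by auto
  have "inv\<^bsub>G\<^esub> ?c \<otimes>\<^bsub>G\<^esub> ?a = ?d \<otimes>\<^bsub>G\<^esub> inv\<^bsub>G\<^esub> ?b"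
    using assms car by (metis G.inv_solve_left G.inv_solve_right G.m_assoc G.m_closed G.inv_closed)
  moreover have "inv\<^bsub>G\<^esub> ?c \<otimes>\<^bsub>G\<^esub> ?a \<in> generate G {\<sigma>}" "?d \<otimes>\<^bsub>G\<^esub> inv\<^bsub>G\<^esub> ?b \<in> generate G {\<tau>}"
    using cyclic_subgroup[OF \<sigma>] cyclic_subgroup[OF \<tau>]
      cyclic_subgroup_eq[OF \<sigma>] cyclic_subgroup_eq[OF \<tau>]
    by (simp_all add: subgroup.m_closed subgroup.m_inv_closed)
  ultimately have "inv\<^bsub>G\<^esub> ?c \<otimes>\<^bsub>G\<^esub> ?a = \<one>\<^bsub>G\<^esub>" using disjoint by auto
  then have "?a = ?c" using car by (metis G.inv_equality G.inv_inv G.inv_closed)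
  then show ?thesis using G.pow_eq_iff_mod[OF \<sigma>] by simp
qed

definition sexp :: "'g \<Rightarrow> nat" where
  "sexp g = (SOME i. \<exists>j::nat. g = \<sigma> [^]\<^bsub>G\<^esub> i \<otimes>\<^bsub>G\<^esub> \<tau> [^]\<^bsub>G\<^esub> j) mod m"

lemma sexp_eq:
  assumes "g = \<sigma> [^]\<^bsub>G\<^esub> (i::nat) \<otimes>\<^bsub>G\<^esub> \<tau> [^]\<^bsub>G\<^esub> (j::nat)"
  shows "sexp g = i mod m"
proof -
  have "\<exists>(i::nat) (j::nat). g = \<sigma> [^]\<^bsub>G\<^esub> i \<otimes>\<^bsub>G\<^esub> \<tau> [^]\<^bsub>G\<^esub> j"
    using assms by blast
  then obtain j' where "g = \<sigma> [^]\<^bsub>G\<^esub> (SOME i::nat. \<exists>j::nat. g = \<sigma> [^]\<^bsub>G\<^esub> i \<otimes>\<^bsub>G\<^esub> \<tau> [^]\<^bsub>G\<^esub> j) \<otimes>\<^bsub>G\<^esub> \<tau> [^]\<^bsub>G\<^esub> (j'::nat)"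
    by (rule someI_ex[THEN exE])
  then show ?thesis unfolding sexp_def using decomp_unique assms by metis
qed

lemma decomp_sexp: "g \<in> carrier G \<Longrightarrow> \<exists>j::nat. g = \<sigma> [^]\<^bsub>G\<^esub> sexp g \<otimes>\<^bsub>G\<^esub> \<tau> [^]\<^bsub>G\<^esub> j"
  using decomp sexp_eq sigma_pow_mod by metis

lemma sexp_mult:
  assumes g: "g \<in> carrier G" and h: "h \<in> carrier G"
  shows "sexp (g \<otimes>\<^bsub>G\<^esub> h) = (sexp g + sexp h) mod m"
proof -
  obtain i j k l :: nat where gi: "g = \<sigma> [^]\<^bsub>G\<^esub> i \<otimes>\<^bsub>G\<^esub> \<tau> [^]\<^bsub>G\<^esub> j"
    and hk: "h = \<sigma> [^]\<^bsub>G\<^esub> k \<otimes>\<^bsub>G\<^esub> \<tau> [^]\<^bsub>G\<^esub> l"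
    using decomp[OF g] decomp[OF h] by blast
  have "\<tau> [^]\<^bsub>G\<^esub> j \<otimes>\<^bsub>G\<^esub> \<sigma> [^]\<^bsub>G\<^esub> k = \<sigma> [^]\<^bsub>G\<^esub> k \<otimes>\<^bsub>G\<^esub> \<tau> [^]\<^bsub>G\<^esub> j"
    using G.group_commutes_pow[OF commute \<sigma> \<tau>, of k] G.group_commutes_pow[of \<tau> "\<sigma> [^]\<^bsub>G\<^esub> k" j] \<sigma> \<tau>
    by simp
  moreover have "g \<otimes>\<^bsub>G\<^esub> h
      = \<sigma> [^]\<^bsub>G\<^esub> i \<otimes>\<^bsub>G\<^esub> (\<tau> [^]\<^bsub>G\<^esub> j \<otimes>\<^bsub>G\<^esub> \<sigma> [^]\<^bsub>G\<^esub> k) \<otimes>\<^bsub>G\<^esub> \<tau> [^]\<^bsub>G\<^esub> l"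
    using gi hk \<sigma> \<tau> by (simp add: G.m_assoc)
  ultimately have "g \<otimes>\<^bsub>G\<^esub> h = \<sigma> [^]\<^bsub>G\<^esub> (i + k) \<otimes>\<^bsub>G\<^esub> \<tau> [^]\<^bsub>G\<^esub> (j + l)"
    using \<sigma> \<tau> by (simp add: G.m_assoc G.nat_pow_mult[symmetric])
  then show ?thesis using sexp_eq gi hk by (simp add: mod_add_eq)
qed

lemma sexp_sigma_pow: "sexp (\<sigma> [^]\<^bsub>G\<^esub> (k::nat)) = k mod m"
  using sexp_eq[where j=0] \<sigma> by simp

lemma sexp_tau_pow: "sexp (\<tau> [^]\<^bsub>G\<^esub> (k::nat)) = 0"
  using sexp_eq[where i=0 and j=k] \<tau> by simp

lemma sexp_sigma_tau_pow: "sexp ((\<sigma> \<otimes>\<^bsub>G\<^esub> \<tau>) [^]\<^bsub>G\<^esub> (k::nat)) = k mod m"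
  using sexp_eq[where j=k] G.pow_mult_distrib[OF commute \<sigma> \<tau>] by simp

lemma tau_invariants: "invariants (generate G {\<tau>}) M act = {y \<in> carrier M. act \<tau> y = y}"
  using act_fixed_pow[OF \<tau>] generate.incl[of \<tau> "{\<tau>}" G]
  unfolding invariants_def cyclic_subgroup_eq[OF \<tau>] by blast

lemma act_sexp:
  assumes "y \<in> carrier M" "act \<tau> y = y" "g \<in> carrier G"
  shows "act g y = act (\<sigma> [^]\<^bsub>G\<^esub> sexp g) y"
proof -
  define i where "i = sexp g"
  obtain j where "g = \<sigma> [^]\<^bsub>G\<^esub> i \<otimes>\<^bsub>G\<^esub> \<tau> [^]\<^bsub>G\<^esub> (j::nat)"
    using decomp_sexp[OF assms(3)] unfolding i_def by blast
  then show ?thesis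
    unfolding i_def[symmetric] using assms \<sigma> \<tau> act_fixed_pow[OF \<tau>] by (simp add: act_comp)
qed

lemma res_cyclic_trivial_iff:
  assumes h: "h \<in> carrier G" and f: "f \<in> Z1 G M act (carrier G)"
  shows "res G M act (generate G {h}) (B1 G M act (carrier G) #>\<^bsub>Z1_group G M act (carrier G)\<^esub> f)
           = B1 G M act (generate G {h})
     \<longleftrightarrow> (\<exists>x\<in>carrier M. f h = dif h x)"
proof -
  have "(\<forall>g\<in>generate G {h}. f g = dif g x) \<longleftrightarrow> f h = dif h x" if x: "x \<in> carrier M" for x
  proof
    assume "\<forall>g\<in>generate G {h}. f g = dif g x"
    then show "f h = dif h x" using generate.incl[of h "{h}" G] by blast
  next
    assume fh: "f h = dif h x"
    have "f (h [^]\<^bsub>G\<^esub> k) = dif (h [^]\<^bsub>G\<^esub> k) x" for k :: nat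
      using cocycle_pow[OF G.subgroup_self f h] pnorm_dif[OF h x] fh by simp
    then show "\<forall>g\<in>generate G {h}. f g = dif g x"
      unfolding cyclic_subgroup_eq[OF h] by blast
  qed
  then show ?thesis
    using res_trivial_iff[OF cyclic_subgroup[OF h] f] by simp
qed

definition Q_num :: "'m set" where
  "Q_num = {x \<in> invariants (generate G {\<tau>}) M act. norm_map G M act \<sigma> x = \<one>\<^bsub>M\<^esub>}
     \<inter> minus_one_image M act \<sigma> (carrier M) \<inter> minus_one_image M act (\<sigma> \<otimes>\<^bsub>G\<^esub> \<tau>) (carrier M)"

definition Q_den :: "'m set" where
  "Q_den = minus_one_image M act \<sigma> (invariants (generate G {\<tau>}) M act)"

lemma Q_num_iff:
  "a \<in> Q_num \<longleftrightarrow> a \<in> carrier M \<and> act \<tau> a = a \<and> pnorm \<sigma> a m = \<one>\<^bsub>M\<^esub>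
     \<and> (\<exists>x\<in>carrier M. a = dif \<sigma> x) \<and> (\<exists>z\<in>carrier M. a = dif (\<sigma> \<otimes>\<^bsub>G\<^esub> \<tau>) z)"
  unfolding Q_num_def minus_one_image_def tau_invariants norm_map_def
  using finprod_pnorm[OF \<sigma>] by auto

lemma Q_den_iff: "a \<in> Q_den \<longleftrightarrow> (\<exists>y\<in>carrier M. act \<tau> y = y \<and> a = dif \<sigma> y)"
  unfolding Q_den_def minus_one_image_def tau_invariants by auto

lemma Q_num_subgroup: "subgroup Q_num M"
proof (rule M.subgroupI)
  show "Q_num \<subseteq> carrier M" using Q_num_iff by blast
  have "\<one>\<^bsub>M\<^esub> \<in> Q_num"
    unfolding Q_num_iff using \<sigma> \<tau> \<sigma>\<tau> by (intro conjI bexI[of _ "\<one>\<^bsub>M\<^esub>"]) simp_all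
  then show "Q_num \<noteq> {}" by blast
next
  fix a assume "a \<in> Q_num"
  then obtain x z where a: "a \<in> carrier M" "act \<tau> a = a" "pnorm \<sigma> a m = \<one>\<^bsub>M\<^esub>"
    and x: "x \<in> carrier M" "a = dif \<sigma> x" and z: "z \<in> carrier M" "a = dif (\<sigma> \<otimes>\<^bsub>G\<^esub> \<tau>) z"
    unfolding Q_num_iff by blast
  have "inv\<^bsub>M\<^esub> a = dif \<sigma> (inv\<^bsub>M\<^esub> x)"
    unfolding x(2) by (rule dif_inv[OF \<sigma> x(1), symmetric])
  moreover have "inv\<^bsub>M\<^esub> a = dif (\<sigma> \<otimes>\<^bsub>G\<^esub> \<tau>) (inv\<^bsub>M\<^esub> z)"
    unfolding z(2) by (rule dif_inv[OF \<sigma>\<tau> z(1), symmetric])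
  moreover have "act \<tau> (inv\<^bsub>M\<^esub> a) = inv\<^bsub>M\<^esub> a" "pnorm \<sigma> (inv\<^bsub>M\<^esub> a) m = \<one>\<^bsub>M\<^esub>"
    using a \<sigma> \<tau> by (simp_all add: pnorm_inv)
  ultimately show "inv\<^bsub>M\<^esub> a \<in> Q_num"
    unfolding Q_num_iff using a x z by blast
next
  fix a b assume "a \<in> Q_num" "b \<in> Q_num"
  then obtain x z x' z' where a: "a \<in> carrier M" "act \<tau> a = a" "pnorm \<sigma> a m = \<one>\<^bsub>M\<^esub>"
    and x: "x \<in> carrier M" "a = dif \<sigma> x" and z: "z \<in> carrier M" "a = dif (\<sigma> \<otimes>\<^bsub>G\<^esub> \<tau>) z"
    and b: "b \<in> carrier M" "act \<tau> b = b" "pnorm \<sigma> b m = \<one>\<^bsub>M\<^esub>"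
    and x': "x' \<in> carrier M" "b = dif \<sigma> x'" and z': "z' \<in> carrier M" "b = dif (\<sigma> \<otimes>\<^bsub>G\<^esub> \<tau>) z'"
    unfolding Q_num_iff by blast
  have "a \<otimes>\<^bsub>M\<^esub> b = dif \<sigma> (x \<otimes>\<^bsub>M\<^esub> x')"
    unfolding x(2) x'(2) by (rule dif_mult[OF \<sigma> x(1) x'(1), symmetric])
  moreover have "a \<otimes>\<^bsub>M\<^esub> b = dif (\<sigma> \<otimes>\<^bsub>G\<^esub> \<tau>) (z \<otimes>\<^bsub>M\<^esub> z')"
    unfolding z(2) z'(2) by (rule dif_mult[OF \<sigma>\<tau> z(1) z'(1), symmetric])
  moreover have "act \<tau> (a \<otimes>\<^bsub>M\<^esub> b) = a \<otimes>\<^bsub>M\<^esub> b" "pnorm \<sigma> (a \<otimes>\<^bsub>M\<^esub> b) m = \<one>\<^bsub>M\<^esub>"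
    using a b \<sigma> \<tau> by (simp_all add: pnorm_mult)
  ultimately show "a \<otimes>\<^bsub>M\<^esub> b \<in> Q_num"
    unfolding Q_num_iff using a b x z x' z' by blast
qed

lemma Q_den_subset: "Q_den \<subseteq> Q_num"
proof
  fix a assume "a \<in> Q_den"
  then obtain y where y: "y \<in> carrier M" "act \<tau> y = y" and a: "a = dif \<sigma> y"
    unfolding Q_den_iff by blast
  have "a \<in> carrier M"
    using a y \<sigma> by simp
  moreover have "act \<tau> a = a"
    using a y \<sigma> \<tau> act_commute[OF \<tau> \<sigma> commute[symmetric]] by simp
  moreover have "pnorm \<sigma> a m = \<one>\<^bsub>M\<^esub>"
    using a y \<sigma> by (simp add: pnorm_dif)
  moreover have "a = dif (\<sigma> \<otimes>\<^bsub>G\<^esub> \<tau>) y"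
    using a y \<sigma> \<tau> by (simp add: act_comp)
  ultimately show "a \<in> Q_num"
    unfolding Q_num_iff using a y \<sigma> by blast
qed

definition norm_cocycle :: "'m \<Rightarrow> 'g \<Rightarrow> 'm" where
  "norm_cocycle a = (\<lambda>g\<in>carrier G. pnorm \<sigma> a (sexp g))"

lemma norm_cocycle_Z1:
  assumes a: "a \<in> carrier M" "act \<tau> a = a" and norm: "pnorm \<sigma> a m = \<one>\<^bsub>M\<^esub>"
  shows "norm_cocycle a \<in> Z1 G M act (carrier G)"
  unfolding norm_cocycle_def
proof (rule Z1_I)
  fix g h assume g: "g \<in> carrier G" and h: "h \<in> carrier G"
  have "pnorm \<sigma> a (sexp (g \<otimes>\<^bsub>G\<^esub> h)) = pnorm \<sigma> a (sexp g + sexp h)"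
    using sexp_mult[OF g h] pnorm_mod[OF \<sigma> a(1) norm, of "sexp g + sexp h"] by simp
  also have "\<dots> = pnorm \<sigma> a (sexp g) \<otimes>\<^bsub>M\<^esub> act (\<sigma> [^]\<^bsub>G\<^esub> sexp g) (pnorm \<sigma> a (sexp h))"
    by (rule pnorm_add[OF \<sigma> a(1)])
  also have "act (\<sigma> [^]\<^bsub>G\<^esub> sexp g) (pnorm \<sigma> a (sexp h)) = act g (pnorm \<sigma> a (sexp h))"
    using act_sexp[OF _ pnorm_fixed[OF \<sigma> \<tau> commute a] g] \<sigma> a by simp
  finally show "(\<lambda>g\<in>carrier G. pnorm \<sigma> a (sexp g)) (g \<otimes>\<^bsub>G\<^esub> h) =
      (\<lambda>g\<in>carrier G. pnorm \<sigma> a (sexp g)) g \<otimes>\<^bsub>M\<^esub> act g ((\<lambda>g\<in>carrier G. pnorm \<sigma> a (sexp g)) h)"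
    using g h by simp
qed (use a \<sigma> in auto)

lemma norm_cocycle_mult:
  "a \<in> carrier M \<Longrightarrow> b \<in> carrier M \<Longrightarrow>
   norm_cocycle (a \<otimes>\<^bsub>M\<^esub> b) = norm_cocycle a \<otimes>\<^bsub>Z1_group G M act (carrier G)\<^esub> norm_cocycle b"
  unfolding norm_cocycle_def using pnorm_mult[OF \<sigma>] by (auto simp: fun_eq_iff)

lemma norm_cocycle_sigma:
  assumes "a \<in> carrier M" "pnorm \<sigma> a m = \<one>\<^bsub>M\<^esub>"
  shows "norm_cocycle a \<sigma> = a"
  unfolding norm_cocycle_def using \<sigma> sexp_sigma_pow[of 1] pnorm_mod[OF \<sigma> assms, of 1] assms
  by simp

lemma norm_cocycle_tau: "norm_cocycle a \<tau> = \<one>\<^bsub>M\<^esub>"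
  unfolding norm_cocycle_def using \<tau> sexp_tau_pow[of 1] by simp

lemma norm_cocycle_sigma_tau:
  assumes "a \<in> carrier M" "pnorm \<sigma> a m = \<one>\<^bsub>M\<^esub>"
  shows "norm_cocycle a (\<sigma> \<otimes>\<^bsub>G\<^esub> \<tau>) = a"
  unfolding norm_cocycle_def using \<sigma>\<tau> sexp_sigma_tau_pow[of 1] pnorm_mod[OF \<sigma> assms, of 1] assms
  by simp

lemma normalized_cocycle:
  assumes f: "f \<in> Z1 G M act (carrier G)" and f\<tau>: "f \<tau> = \<one>\<^bsub>M\<^esub>"
  shows "act \<tau> (f \<sigma>) = f \<sigma>" and "pnorm \<sigma> (f \<sigma>) m = \<one>\<^bsub>M\<^esub>" and "f = norm_cocycle (f \<sigma>)"
proof -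
  note pow = cocycle_pow[OF G.subgroup_self f]
  have f\<sigma>: "f \<sigma> \<in> carrier M" using Z1_D(1)[OF f \<sigma>] .
  have "act \<tau> (f \<sigma>) = f (\<tau> \<otimes>\<^bsub>G\<^esub> \<sigma>)" using Z1_D(3)[OF f \<tau> \<sigma>] f\<tau> f\<sigma> \<tau> by simp
  also have "\<dots> = f \<sigma>" using Z1_D(3)[OF f \<sigma> \<tau>] f\<tau> f\<sigma> \<sigma> commute by simp
  finally show "act \<tau> (f \<sigma>) = f \<sigma>" .
  show "pnorm \<sigma> (f \<sigma>) m = \<one>\<^bsub>M\<^esub>" using pow[OF \<sigma>, of m] pow[OF \<sigma>, of 0] \<sigma> by simp
  show "f = norm_cocycle (f \<sigma>)"
  proof
    fix g show "f g = norm_cocycle (f \<sigma>) g"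
    proof (cases "g \<in> carrier G")
      case True
      then obtain j where "g = \<sigma> [^]\<^bsub>G\<^esub> sexp g \<otimes>\<^bsub>G\<^esub> \<tau> [^]\<^bsub>G\<^esub> (j::nat)"
        using decomp_sexp by blast
      then have "f g = pnorm \<sigma> (f \<sigma>) (sexp g)"
        using cocycle_decomp[OF f \<sigma> \<tau>, of "sexp g" j] f\<tau> f\<sigma> \<sigma> \<tau> by simp
      with True show ?thesis by (simp add: norm_cocycle_def)
    qed (simp add: norm_cocycle_def Z1_D(2)[OF f])
  qed
qed

definition class_map :: "'m \<Rightarrow> ('g \<Rightarrow> 'm) set" where
  "class_map a = B1 G M act (carrier G) #>\<^bsub>Z1_group G M act (carrier G)\<^esub> norm_cocycle a"

lemma class_map_hom: "class_map \<in> hom (M\<lparr>carrier := Q_num\<rparr>) (H1 G M act (carrier G))"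
proof (rule homI)
  fix a assume "a \<in> carrier (M\<lparr>carrier := Q_num\<rparr>)"
  then have "norm_cocycle a \<in> Z1 G M act (carrier G)"
    using Q_num_iff norm_cocycle_Z1 by simp
  then show "class_map a \<in> carrier (H1 G M act (carrier G))"
    by (auto simp: class_map_def RCOSETS_def)
next
  fix a b assume "a \<in> carrier (M\<lparr>carrier := Q_num\<rparr>)" "b \<in> carrier (M\<lparr>carrier := Q_num\<rparr>)"
  then have "a \<in> Q_num" "b \<in> Q_num" by auto
  then show "class_map (a \<otimes>\<^bsub>M\<lparr>carrier := Q_num\<rparr>\<^esub> b) = class_map a \<otimes>\<^bsub>H1 G M act (carrier G)\<^esub> class_map b"
    unfolding class_map_def Q_num_iff
    using normal.rcos_sum[OF B1_normal[OF G.subgroup_self]] norm_cocycle_Z1 norm_cocycle_mult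
    by auto
qed

lemma class_map_trivial_iff:
  assumes a: "a \<in> Q_num"
  shows "class_map a = B1 G M act (carrier G) \<longleftrightarrow> a \<in> Q_den"
proof -
  have a': "a \<in> carrier M" "act \<tau> a = a" "pnorm \<sigma> a m = \<one>\<^bsub>M\<^esub>"
    using a Q_num_iff by auto
  have "class_map a = B1 G M act (carrier G) \<longleftrightarrow> (\<exists>x\<in>carrier M. norm_cocycle a = cob (carrier G) x)"
    unfolding class_map_def class_trivial_iff[OF G.subgroup_self norm_cocycle_Z1[OF a']]
    unfolding B1_eq by (simp add: image_iff)
  also have "\<dots> \<longleftrightarrow> a \<in> Q_den"
  proof
    assume "\<exists>x\<in>carrier M. norm_cocycle a = cob (carrier G) x"
    then obtain x where x: "x \<in> carrier M" and fx: "norm_cocycle a = cob (carrier G) x" by blast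
    have "dif \<tau> x = \<one>\<^bsub>M\<^esub>"
      using fun_cong[OF fx, of \<tau>] norm_cocycle_tau \<tau> by (simp add: cob_def)
    moreover have "a = dif \<sigma> x"
      using fun_cong[OF fx, of \<sigma>] norm_cocycle_sigma[OF a'(1,3)] \<sigma> by (simp add: cob_def)
    ultimately show "a \<in> Q_den"
      unfolding Q_den_iff using x dif_one_iff[OF \<tau> x] by blast
  next
    assume "a \<in> Q_den"
    then obtain y where y: "y \<in> carrier M" "act \<tau> y = y" and ay: "a = dif \<sigma> y"
      unfolding Q_den_iff by blast
    have "norm_cocycle a = cob (carrier G) y"
      unfolding norm_cocycle_def cob_def
      using ay pnorm_dif[OF \<sigma> y(1)] act_sexp[OF y] by (intro restrict_ext) simp
    then show "\<exists>x\<in>carrier M. norm_cocycle a = cob (carrier G) x" using y by blast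
  qed
  finally show ?thesis .
qed

definition res_kernel :: "('g \<Rightarrow> 'm) set set" where
  "res_kernel = kernel (H1 G M act (carrier G))
     (H1 G M act (generate G {\<sigma>}) \<times>\<times> H1 G M act (generate G {\<tau>})
        \<times>\<times> H1 G M act (generate G {\<sigma> \<otimes>\<^bsub>G\<^esub> \<tau>}))
     (\<lambda>C. (res G M act (generate G {\<sigma>}) C, res G M act (generate G {\<tau>}) C,
            res G M act (generate G {\<sigma> \<otimes>\<^bsub>G\<^esub> \<tau>}) C))"

lemma res_kernel_iff:
  assumes f: "f \<in> Z1 G M act (carrier G)"
  shows "B1 G M act (carrier G) #>\<^bsub>Z1_group G M act (carrier G)\<^esub> f \<in> res_kernel \<longleftrightarrow>
     (\<exists>x\<in>carrier M. f \<sigma> = dif \<sigma> x) \<and> (\<exists>y\<in>carrier M. f \<tau> = dif \<tau> y)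
     \<and> (\<exists>z\<in>carrier M. f (\<sigma> \<otimes>\<^bsub>G\<^esub> \<tau>) = dif (\<sigma> \<otimes>\<^bsub>G\<^esub> \<tau>) z)"
proof -
  have "B1 G M act (carrier G) #>\<^bsub>Z1_group G M act (carrier G)\<^esub> f \<in> carrier (H1 G M act (carrier G))"
    using f by (auto simp: RCOSETS_def)
  then show ?thesis
    unfolding res_kernel_def kernel_def mem_Collect_eq one_DirProd prod.inject H1_simps(3)
      res_cyclic_trivial_iff[OF \<sigma> f] res_cyclic_trivial_iff[OF \<tau> f] res_cyclic_trivial_iff[OF \<sigma>\<tau> f]
    by blast
qed

lemma class_map_in_kernel:
  assumes a: "a \<in> Q_num"
  shows "class_map a \<in> res_kernel"
proof -
  have a': "a \<in> carrier M" "act \<tau> a = a" "pnorm \<sigma> a m = \<one>\<^bsub>M\<^esub>"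
    using a Q_num_iff by auto
  show ?thesis
    unfolding class_map_def res_kernel_iff[OF norm_cocycle_Z1[OF a']]
  proof (intro conjI)
    show "\<exists>x\<in>carrier M. norm_cocycle a \<sigma> = dif \<sigma> x"
      using a Q_num_iff norm_cocycle_sigma[OF a'(1,3)] by simp
    show "\<exists>y\<in>carrier M. norm_cocycle a \<tau> = dif \<tau> y"
      using norm_cocycle_tau \<tau> by (intro bexI[of _ "\<one>\<^bsub>M\<^esub>"]) simp_all
    show "\<exists>z\<in>carrier M. norm_cocycle a (\<sigma> \<otimes>\<^bsub>G\<^esub> \<tau>) = dif (\<sigma> \<otimes>\<^bsub>G\<^esub> \<tau>) z"
      using a Q_num_iff norm_cocycle_sigma_tau[OF a'(1,3)] by simp
  qed
qed

text \<open>Surjectivity: normalise a representative to vanish at \<open>\<tau>\<close>; it is then the norm cocycle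
  of its value at \<open>\<sigma>\<close>, which lies in \<open>Q_num\<close>.\<close>
lemma kernel_in_image:
  assumes C: "C \<in> res_kernel"
  shows "C \<in> class_map ` Q_num"
proof -
  obtain f where f: "f \<in> Z1 G M act (carrier G)"
    and Cf: "C = B1 G M act (carrier G) #>\<^bsub>Z1_group G M act (carrier G)\<^esub> f"
    using C unfolding res_kernel_def kernel_def by (auto simp: RCOSETS_def)
  obtain x y z where x: "x \<in> carrier M" "f \<sigma> = dif \<sigma> x" and y: "y \<in> carrier M" "f \<tau> = dif \<tau> y"
    and z: "z \<in> carrier M" "f (\<sigma> \<otimes>\<^bsub>G\<^esub> \<tau>) = dif (\<sigma> \<otimes>\<^bsub>G\<^esub> \<tau>) z"
    using C res_kernel_iff[OF f] unfolding Cf by blast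
  interpret Z: comm_group "Z1_group G M act (carrier G)" by (rule Z1_comm_group[OF G.subgroup_self])
  define w where "w = inv\<^bsub>M\<^esub> y"
  have w: "w \<in> carrier M" using y by (simp add: w_def)
  define f' where "f' = cob (carrier G) w \<otimes>\<^bsub>Z1_group G M act (carrier G)\<^esub> f"
  have f': "f' \<in> Z1 G M act (carrier G)"
    unfolding f'_def using Z.m_closed cob_Z1[OF G.subgroup_self w] f by simp
  have f'_val: "f' g = dif g (w \<otimes>\<^bsub>M\<^esub> u)" if "g \<in> carrier G" "u \<in> carrier M" "f g = dif g u" for g u
    using that w by (simp add: f'_def cob_def dif_mult del: act_mult)
  have f'\<tau>: "f' \<tau> = \<one>\<^bsub>M\<^esub>"
    using f'_val[OF \<tau> y] y \<tau> by (simp add: w_def)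
  define a where "a = f' \<sigma>"
  have a\<sigma>: "a = dif \<sigma> (w \<otimes>\<^bsub>M\<^esub> x)" unfolding a_def using f'_val[OF \<sigma> x] .
  have "a = f' (\<sigma> \<otimes>\<^bsub>G\<^esub> \<tau>)"
    using Z1_D(3)[OF f' \<sigma> \<tau>] Z1_D(1)[OF f' \<sigma>] f'\<tau> \<sigma> by (simp add: a_def)
  then have a\<sigma>\<tau>: "a = dif (\<sigma> \<otimes>\<^bsub>G\<^esub> \<tau>) (w \<otimes>\<^bsub>M\<^esub> z)" using f'_val[OF \<sigma>\<tau> z] by simp
  have "a \<in> carrier M" "act \<tau> a = a" "pnorm \<sigma> a m = \<one>\<^bsub>M\<^esub>"
    using Z1_D(1)[OF f' \<sigma>] normalized_cocycle(1,2)[OF f' f'\<tau>] by (simp_all add: a_def)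
  then have aQ: "a \<in> Q_num"
    unfolding Q_num_iff using a\<sigma> a\<sigma>\<tau> M.m_closed[OF w x(1)] M.m_closed[OF w z(1)] by blast
  have norm_a: "norm_cocycle a = f'"
    unfolding a_def by (rule normalized_cocycle(3)[OF f' f'\<tau>, symmetric])
  have "class_map a = C"
    unfolding class_map_def Cf norm_a f'_def by (rule class_cob_mult[OF f w])
  with aQ show ?thesis by blast
qed

theorem res_kernel_iso:
  "(H1 G M act (carrier G))\<lparr>carrier := res_kernel\<rparr> \<cong> M\<lparr>carrier := Q_num\<rparr> Mod Q_den"
proof -
  let ?Q = "M\<lparr>carrier := Q_num\<rparr>" and ?H = "H1 G M act (carrier G)"
  let ?K = "?H\<lparr>carrier := res_kernel\<rparr>"
  have image: "class_map ` Q_num = res_kernel"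
    using class_map_in_kernel kernel_in_image by blast
  have "group ?Q" by (rule subgroup.subgroup_is_group[OF Q_num_subgroup M.is_group])
  moreover have "group ?K"
  proof -
    have "group_hom ?Q ?H class_map"
      using \<open>group ?Q\<close> H1_group[OF G.subgroup_self] class_map_hom
      by (simp add: group_hom_def group_hom_axioms_def)
    then have "subgroup res_kernel ?H"
      using group_hom.img_is_subgroup image by fastforce
    then show ?thesis by (rule subgroup.subgroup_is_group[OF _ H1_group[OF G.subgroup_self]])
  qed
  moreover have "class_map \<in> hom ?Q ?K"
    using class_map_hom class_map_in_kernel by (auto simp: hom_def)
  ultimately have hom: "group_hom ?Q ?K class_map"
    by (simp add: group_hom_def group_hom_axioms_def)
  have "kernel ?Q ?K class_map = Q_den"
    using class_map_trivial_iff Q_den_subset by (auto simp: kernel_def)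
  then have "?Q Mod Q_den \<cong> ?K"
    using group_hom.FactGroup_iso[OF hom] image by simp
  moreover have "group (?Q Mod Q_den)"
    using group_hom.normal_kernel[OF hom] \<open>kernel ?Q ?K class_map = Q_den\<close>
    by (metis normal.factorgroup_is_group)
  ultimately show ?thesis by (rule group.iso_sym[rotated])
qed

end

theorem mainTheorem17:
  fixes G :: "'g monoid" and M :: "'m monoid" and act :: "'g \<Rightarrow> 'm \<Rightarrow> 'm"
    and \<sigma> \<tau> :: 'g
  assumes "G_module G M act"
    and "finite (carrier G)"
    and "\<sigma> \<in> carrier G" and "\<tau> \<in> carrier G"
    and "\<sigma> \<otimes>\<^bsub>G\<^esub> \<tau> = \<tau> \<otimes>\<^bsub>G\<^esub> \<sigma>"
    and "set_mult G (generate G {\<sigma>}) (generate G {\<tau>}) = carrier G"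
    and "generate G {\<sigma>} \<inter> generate G {\<tau>} = {\<one>\<^bsub>G\<^esub>}"
  shows "(H1 G M act (carrier G))
           \<lparr>carrier := kernel (H1 G M act (carrier G))
              (H1 G M act (generate G {\<sigma>}) \<times>\<times> H1 G M act (generate G {\<tau>})
                 \<times>\<times> H1 G M act (generate G {\<sigma> \<otimes>\<^bsub>G\<^esub> \<tau>}))
              (\<lambda>C. (res G M act (generate G {\<sigma>}) C, res G M act (generate G {\<tau>}) C,
                     res G M act (generate G {\<sigma> \<otimes>\<^bsub>G\<^esub> \<tau>}) C))\<rparr>
         \<cong> (M\<lparr>carrier :=
                {x \<in> invariants (generate G {\<tau>}) M act. norm_map G M act \<sigma> x = \<one>\<^bsub>M\<^esub>}
                \<inter> minus_one_image M act \<sigma> (carrier M)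
                \<inter> minus_one_image M act (\<sigma> \<otimes>\<^bsub>G\<^esub> \<tau>) (carrier M)\<rparr>
            Mod minus_one_image M act \<sigma> (invariants (generate G {\<tau>}) M act))"
proof -
  interpret bicyclic G M act \<sigma> \<tau>
    using assms by (unfold_locales) (simp_all add: G_mod_def)
  show ?thesis
    using res_kernel_iso unfolding res_kernel_def Q_num_def Q_den_def .
qed

end
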